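(* Let $\mathcal{D}$ be an algebra of bounded real functions with the Stone property and let $(L,\mathcal{D})$ be a sup-norm-closable Lagrangian. Then its associated energy form $(\mathcal{E}_L,\mathcal{D})$ is a sup-norm-closable bilinear form.
   Context: Stone property: $f\wedge1\in\mathcal{D}$. $T_1(x)=\max(x,0)\wedge1$. A Lagrangian is a symmetric bilinear map $(f,g)\mapsto L_{f,g}$ into the dual $\mathcal{D}'$ of $(\mathcal{D},\|\cdot\|_{\sup})$, with each $L_f:=L_{f,f}$ positive and $L_f-L_{T_1(f)}$ positive for all $f$. A bilinear form is sup-norm-closable if every $\mathcal{E}$-Cauchy $(f_n)$ with $\|f_n\|_{\sup}\to0$ has $\mathcal{E}(f_n)\to0$; a Lagrangian is sup-norm-closable if for each $h\ge0$ in $\mathcal{D}$ the bilinear form $(f,g)\mapsto L_{f,g}(h)$ is sup-norm-closable. The associated energy form is $\mathcal{E}_L(f)=\frac12\|L_f\|_{\mathcal{D}'}$ (with $\|L\|_{\mathcal{D}'}=\sup\{|L(h)|:\|h\|_{\sup}\le1\}$), which satisfies the parallelogram law, polarized to a bilinear form $\mathcal{E}_L(f,g)=\frac14(\mathcal{E}_L(f+g)-\mathcal{E}_L(f-g))$. *)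

theory Defs
  imports "HOL-Analysis.Analysis"
begin

definition supnorm :: "('a \<Rightarrow> real) \<Rightarrow> real" where
  "supnorm f = (SUP x. \<bar>f x\<bar>)"

definition bounded_fun :: "('a \<Rightarrow> real) \<Rightarrow> bool" where
  "bounded_fun f \<longleftrightarrow> (\<exists>C. \<forall>x. \<bar>f x\<bar> \<le> C)"

definition bounded_fun_algebra :: "('a \<Rightarrow> real) set \<Rightarrow> bool" where
  "bounded_fun_algebra D \<longleftrightarrow>
     (\<forall>f\<in>D. bounded_fun f) \<and> (\<lambda>x. 0) \<in> D \<and>
     (\<forall>f\<in>D. \<forall>g\<in>D. (\<lambda>x. f x + g x) \<in> D) \<and>
     (\<forall>f\<in>D. \<forall>c::real. (\<lambda>x. c * f x) \<in> D) \<and>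
     (\<forall>f\<in>D. \<forall>g\<in>D. (\<lambda>x. f x * g x) \<in> D)"

definition stone_property :: "('a \<Rightarrow> real) set \<Rightarrow> bool" where
  "stone_property D \<longleftrightarrow> (\<forall>f\<in>D. (\<lambda>x. min (f x) 1) \<in> D)"

definition T1 :: "('a \<Rightarrow> real) \<Rightarrow> ('a \<Rightarrow> real)" where
  "T1 f = (\<lambda>x. min (max (f x) 0) 1)"

definition in_dual :: "('a \<Rightarrow> real) set \<Rightarrow> (('a \<Rightarrow> real) \<Rightarrow> real) \<Rightarrow> bool" where
  "in_dual D l \<longleftrightarrow>
     (\<forall>f\<in>D. \<forall>g\<in>D. l (\<lambda>x. f x + g x) = l f + l g) \<and>
     (\<forall>f\<in>D. \<forall>c::real. l (\<lambda>x. c * f x) = c * l f) \<and>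
     (\<exists>C. \<forall>h\<in>D. \<bar>l h\<bar> \<le> C * supnorm h)"

definition dual_norm :: "('a \<Rightarrow> real) set \<Rightarrow> (('a \<Rightarrow> real) \<Rightarrow> real) \<Rightarrow> real" where
  "dual_norm D l = (SUP h\<in>{h\<in>D. supnorm h \<le> 1}. \<bar>l h\<bar>)"

definition positive_functional :: "('a \<Rightarrow> real) set \<Rightarrow> (('a \<Rightarrow> real) \<Rightarrow> real) \<Rightarrow> bool" where
  "positive_functional D l \<longleftrightarrow> (\<forall>h\<in>D. (\<forall>x. h x \<ge> 0) \<longrightarrow> l h \<ge> 0)"

text \<open>A Lagrangian: L f g is the functional L_{f,g}, evaluated at h as L f g h.\<close>
definition lagrangian ::
  "('a \<Rightarrow> real) set \<Rightarrow> (('a \<Rightarrow> real) \<Rightarrow> ('a \<Rightarrow> real) \<Rightarrow> ('a \<Rightarrow> real) \<Rightarrow> real) \<Rightarrow> bool" where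
  "lagrangian D L \<longleftrightarrow>
     (\<forall>f\<in>D. \<forall>g\<in>D. in_dual D (L f g)) \<and>
     (\<forall>f\<in>D. \<forall>g\<in>D. \<forall>h\<in>D. L f g h = L g f h) \<and>
     (\<forall>f\<in>D. \<forall>f'\<in>D. \<forall>g\<in>D. \<forall>h\<in>D. L (\<lambda>x. f x + f' x) g h = L f g h + L f' g h) \<and>
     (\<forall>f\<in>D. \<forall>g\<in>D. \<forall>h\<in>D. \<forall>c::real. L (\<lambda>x. c * f x) g h = c * L f g h) \<and>
     (\<forall>f\<in>D. positive_functional D (L f f)) \<and>
     (\<forall>f\<in>D. T1 f \<in> D \<and> positive_functional D (\<lambda>h. L f f h - L (T1 f) (T1 f) h))"

definition supnorm_closable ::
  "('a \<Rightarrow> real) set \<Rightarrow> (('a \<Rightarrow> real) \<Rightarrow> ('a \<Rightarrow> real) \<Rightarrow> real) \<Rightarrow> bool" where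
  "supnorm_closable D B \<longleftrightarrow>
     (\<forall>fs::nat \<Rightarrow> ('a \<Rightarrow> real).
        (\<forall>n. fs n \<in> D) \<longrightarrow>
        (\<forall>\<epsilon>>0. \<exists>N. \<forall>n\<ge>N. \<forall>m\<ge>N.
            B (\<lambda>x. fs n x - fs m x) (\<lambda>x. fs n x - fs m x) < \<epsilon>) \<longrightarrow>
        (\<lambda>n. supnorm (fs n)) \<longlonglongrightarrow> 0 \<longrightarrow>
        (\<lambda>n. B (fs n) (fs n)) \<longlonglongrightarrow> 0)"

definition supnorm_closable_lagrangian ::
  "('a \<Rightarrow> real) set \<Rightarrow> (('a \<Rightarrow> real) \<Rightarrow> ('a \<Rightarrow> real) \<Rightarrow> ('a \<Rightarrow> real) \<Rightarrow> real) \<Rightarrow> bool" where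
  "supnorm_closable_lagrangian D L \<longleftrightarrow>
     (\<forall>h\<in>D. (\<forall>x. h x \<ge> 0) \<longrightarrow> supnorm_closable D (\<lambda>f g. L f g h))"

definition energy :: "('a \<Rightarrow> real) set \<Rightarrow> (('a \<Rightarrow> real) \<Rightarrow> ('a \<Rightarrow> real) \<Rightarrow> ('a \<Rightarrow> real) \<Rightarrow> real)
     \<Rightarrow> ('a \<Rightarrow> real) \<Rightarrow> real" where
  "energy D L f = dual_norm D (L f f) / 2"

definition energy_form :: "('a \<Rightarrow> real) set \<Rightarrow> (('a \<Rightarrow> real) \<Rightarrow> ('a \<Rightarrow> real) \<Rightarrow> ('a \<Rightarrow> real) \<Rightarrow> real)
     \<Rightarrow> ('a \<Rightarrow> real) \<Rightarrow> ('a \<Rightarrow> real) \<Rightarrow> real" where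
  "energy_form D L f g =
     (energy D L (\<lambda>x. f x + g x) - energy D L (\<lambda>x. f x - g x)) / 4"

end

theory Submission
  imports Defs
begin

(* On the diagonal the polarised energy form is the energy itself,
   E_L(f,f) = ||L_f||/2.  Let (f_n) be E_L-Cauchy with ||f_n||_sup -> 0 and write K for
   the nonnegative h in D with ||h||_sup <= 1.
   (1) |L_{f_n-f_m}(h)| <= ||L_{f_n-f_m}|| for ||h||_sup <= 1, so for every h in K the
       sequence is Cauchy for the form (f,g) |-> L_{f,g}(h), uniformly in h; closability
       of L then gives L_{f_n}(h) -> 0 for each h in K.
   (2) For a positive semidefinite symmetric bilinear form q(a) <= 2 q(a-b) + 2 q(b);
       with b = f_m and m -> oo this turns the uniform Cauchy bound into a uniform
       bound L_{f_n}(h) <= r/2 on K for all large n.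
   (3) Every h with ||h||_sup <= 1 splits as T1(h) - T1(-h) with both parts in K, so the
       dual norm of a positive functional is controlled by its values on K. *)

lemma algebra_bounded: "bounded_fun_algebra D \<Longrightarrow> f \<in> D \<Longrightarrow> bounded_fun f"
  and algebra_zero: "bounded_fun_algebra D \<Longrightarrow> (\<lambda>x. 0) \<in> D"
  and algebra_add: "bounded_fun_algebra D \<Longrightarrow> f \<in> D \<Longrightarrow> g \<in> D \<Longrightarrow> (\<lambda>x. f x + g x) \<in> D"
  and algebra_scale: "bounded_fun_algebra D \<Longrightarrow> f \<in> D \<Longrightarrow> (\<lambda>x. c * f x) \<in> D"
  by (simp_all add: bounded_fun_algebra_def)

lemma algebra_diff:
  assumes "bounded_fun_algebra D" "f \<in> D" "g \<in> D"
  shows "(\<lambda>x. f x - g x) \<in> D"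
  using algebra_add[OF assms(1,2) algebra_scale[OF assms(1,3), of "-1"]] by simp

lemma abs_le_supnorm:
  assumes "bounded_fun h"
  shows "\<bar>h x\<bar> \<le> supnorm h"
proof -
  obtain C where "\<forall>x. \<bar>h x\<bar> \<le> C" using assms unfolding bounded_fun_def by blast
  then have "bdd_above (range (\<lambda>x. \<bar>h x\<bar>))" by (intro bdd_aboveI[where M=C]) auto
  then show ?thesis unfolding supnorm_def by (rule cSUP_upper[rotated]) simp
qed

lemma supnorm_nonneg: "bounded_fun h \<Longrightarrow> 0 \<le> supnorm h"
  using abs_le_supnorm abs_ge_zero order_trans by metis

lemma supnorm_zero: "supnorm (\<lambda>x. 0) = 0"
  by (simp add: supnorm_def)

lemma in_dual_diff:
  assumes "in_dual D l" "bounded_fun_algebra D" "a \<in> D" "b \<in> D"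
  shows "l (\<lambda>x. a x - b x) = l a - l b"
proof -
  have add: "\<forall>f\<in>D. \<forall>g\<in>D. l (\<lambda>x. f x + g x) = l f + l g"
    and scale: "\<forall>f\<in>D. \<forall>c. l (\<lambda>x. c * f x) = c * l f"
    using assms(1) unfolding in_dual_def by blast+
  have "l (\<lambda>x. a x + (-1) * b x) = l a + (-1) * l b"
    using add[rule_format, OF assms(3) algebra_scale[OF assms(2,4), of "-1"]]
      scale[rule_format, OF assms(4), of "-1"] by simp
  then show ?thesis by simp
qed

lemma dual_norm_upper:
  assumes "in_dual D l" "bounded_fun_algebra D" "h \<in> D" "supnorm h \<le> 1"
  shows "\<bar>l h\<bar> \<le> dual_norm D l"
proof -
  obtain C where C: "\<forall>h\<in>D. \<bar>l h\<bar> \<le> C * supnorm h" using assms(1) unfolding in_dual_def by blast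
  have "\<bar>l k\<bar> \<le> \<bar>C\<bar>" if "k \<in> D" "supnorm k \<le> 1" for k
  proof -
    have "0 \<le> supnorm k" using supnorm_nonneg algebra_bounded assms(2) that(1) by blast
    then have "C * supnorm k \<le> \<bar>C\<bar> * supnorm k" by (simp add: mult_right_mono)
    also have "\<dots> \<le> \<bar>C\<bar>" using that(2) \<open>0 \<le> supnorm k\<close> by (simp add: mult_left_le)
    finally have "C * supnorm k \<le> \<bar>C\<bar>" .
    then show ?thesis using C that(1) by force
  qed
  then have "bdd_above ((\<lambda>h. \<bar>l h\<bar>) ` {h \<in> D. supnorm h \<le> 1})"
    by (intro bdd_aboveI[where M="\<bar>C\<bar>"]) auto
  then show ?thesis unfolding dual_norm_def by (rule cSUP_upper[rotated]) (simp add: assms)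
qed

lemma dual_norm_least:
  assumes "bounded_fun_algebra D" "\<And>h. h \<in> D \<Longrightarrow> supnorm h \<le> 1 \<Longrightarrow> \<bar>l h\<bar> \<le> c"
  shows "dual_norm D l \<le> c"
proof -
  have "(\<lambda>x. 0) \<in> {h \<in> D. supnorm h \<le> 1}" using algebra_zero[OF assms(1)] by (simp add: supnorm_zero)
  then show ?thesis unfolding dual_norm_def by (intro cSUP_least) (auto intro: assms(2))
qed

lemma dual_norm_nonneg:
  assumes "in_dual D l" "bounded_fun_algebra D"
  shows "0 \<le> dual_norm D l"
  using dual_norm_upper[OF assms algebra_zero[OF assms(2)]] by (simp add: supnorm_zero)

lemma dual_norm_scale:
  assumes "in_dual D l" "in_dual D l'" "bounded_fun_algebra D" "0 \<le> c"
    and l': "\<And>h. h \<in> D \<Longrightarrow> l' h = c * l h"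
  shows "dual_norm D l' = c * dual_norm D l"
proof (rule antisym)
  show "dual_norm D l' \<le> c * dual_norm D l"
    using assms dual_norm_upper[OF assms(1,3)]
    by (intro dual_norm_least) (auto simp: abs_mult intro: mult_left_mono)
next
  show "c * dual_norm D l \<le> dual_norm D l'"
  proof (cases "c = 0")
    case True
    then show ?thesis using dual_norm_nonneg[OF assms(2,3)] by simp
  next
    case False
    with assms(4) have "0 < c" by simp
    have "dual_norm D l \<le> dual_norm D l' / c"
    proof (rule dual_norm_least[OF assms(3)])
      fix h assume h: "h \<in> D" "supnorm h \<le> 1"
      have "c * \<bar>l h\<bar> \<le> dual_norm D l'"
        using dual_norm_upper[OF assms(2,3) h] l'[OF h(1)] \<open>0 < c\<close> by (simp add: abs_mult)
      then show "\<bar>l h\<bar> \<le> dual_norm D l' / c" using \<open>0 < c\<close> by (simp add: field_simps)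
    qed
    then show ?thesis using \<open>0 < c\<close> by (simp add: field_simps)
  qed
qed

lemma T1_nonneg: "0 \<le> T1 f x"
  by (simp add: T1_def)

lemma supnorm_T1_le: "supnorm (T1 f) \<le> 1"
  unfolding supnorm_def T1_def by (rule cSUP_least) auto

lemma T1_split: "\<bar>h x\<bar> \<le> 1 \<Longrightarrow> h x = T1 h x - T1 (\<lambda>x. (-1) * h x) x"
  unfolding T1_def by (cases "0 \<le> h x") (simp_all add: max_def min_def)

lemma dual_norm_positive_le:
  assumes D: "bounded_fun_algebra D" "\<forall>f\<in>D. T1 f \<in> D"
    and l: "in_dual D l" "positive_functional D l"
    and bound: "\<And>h. h \<in> D \<Longrightarrow> \<forall>x. 0 \<le> h x \<Longrightarrow> supnorm h \<le> 1 \<Longrightarrow> l h \<le> c"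
  shows "dual_norm D l \<le> c"
proof (rule dual_norm_least[OF D(1)])
  fix h assume h: "h \<in> D" "supnorm h \<le> 1"
  define hp hn where "hp = T1 h" and "hn = T1 (\<lambda>x. (-1) * h x)"
  have in_D: "hp \<in> D" "hn \<in> D"
    using D(2) h(1) algebra_scale[OF D(1) h(1), of "-1"] unfolding hp_def hn_def by blast+
  have nonneg: "\<forall>x. 0 \<le> hp x" "\<forall>x. 0 \<le> hn x"
    unfolding hp_def hn_def by (simp_all add: T1_nonneg)
  have unit: "supnorm hp \<le> 1" "supnorm hn \<le> 1"
    unfolding hp_def hn_def by (rule supnorm_T1_le)+
  have "h = (\<lambda>x. hp x - hn x)"
  proof
    fix x
    have "\<bar>h x\<bar> \<le> 1"
      using abs_le_supnorm[OF algebra_bounded[OF D(1) h(1)], of x] h(2) by linarith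
    then show "h x = hp x - hn x" unfolding hp_def hn_def by (rule T1_split)
  qed
  then have "l h = l hp - l hn" using in_dual_diff[OF l(1) D(1) in_D] by simp
  moreover have "0 \<le> l hp" "0 \<le> l hn"
    using l(2) in_D nonneg unfolding positive_functional_def by blast+
  moreover have "l hp \<le> c" "l hn \<le> c"
    using bound[OF in_D(1) nonneg(1) unit(1)] bound[OF in_D(2) nonneg(2) unit(2)] .
  ultimately show "\<bar>l h\<bar> \<le> c" by linarith
qed

definition symmetric_bilinear_on ::
  "('a \<Rightarrow> real) set \<Rightarrow> (('a \<Rightarrow> real) \<Rightarrow> ('a \<Rightarrow> real) \<Rightarrow> real) \<Rightarrow> bool" where
  "symmetric_bilinear_on D B \<longleftrightarrow>
     (\<forall>f\<in>D. \<forall>g\<in>D. B f g = B g f) \<and>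
     (\<forall>f\<in>D. \<forall>f'\<in>D. \<forall>g\<in>D. B (\<lambda>x. f x + f' x) g = B f g + B f' g) \<and>
     (\<forall>f\<in>D. \<forall>g\<in>D. \<forall>c. B (\<lambda>x. c * f x) g = c * B f g)"

lemma bilinear_expand:
  assumes B: "symmetric_bilinear_on D B" and D: "bounded_fun_algebra D" "f \<in> D" "g \<in> D"
  shows "B (\<lambda>x. f x + c * g x) (\<lambda>x. f x + c * g x) = B f f + 2 * c * B f g + c\<^sup>2 * B g g"
proof -
  define u where "u = (\<lambda>x. f x + c * g x)"
  have cg: "(\<lambda>x. c * g x) \<in> D" using algebra_scale[OF D(1,3)] .
  have u: "u \<in> D" unfolding u_def using algebra_add[OF D(1,2) cg] .
  have add: "B (\<lambda>x. f x + f' x) k = B f k + B f' k" if "f \<in> D" "f' \<in> D" "k \<in> D" for f f' k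
    using B that unfolding symmetric_bilinear_on_def by blast
  have scale: "B (\<lambda>x. c * f x) k = c * B f k" if "f \<in> D" "k \<in> D" for f k
    using B that unfolding symmetric_bilinear_on_def by blast
  have linear: "B u k = B f k + c * B g k" if "k \<in> D" for k
    unfolding u_def using add[OF D(2) cg that] scale[OF D(3) that] by simp
  have sym: "B k k' = B k' k" if "k \<in> D" "k' \<in> D" for k k'
    using B that unfolding symmetric_bilinear_on_def by blast
  have "B u u = B f u + c * B g u" using linear[OF u] .
  also have "\<dots> = B u f + c * B u g" using sym u D by simp
  also have "\<dots> = B f f + 2 * c * B f g + c\<^sup>2 * B g g"
    using linear D sym[OF D(2,3)] by (simp add: algebra_simps power2_eq_square)
  finally show ?thesis unfolding u_def .
qed

text \<open>Step (2): a positive semidefinite symmetric bilinear form satisfies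
  q(a) \<le> 2 q(a - b) + 2 q(b), by the parallelogram identity.\<close>

lemma positive_bilinear_quadratic_bound:
  assumes B: "symmetric_bilinear_on D B" and D: "bounded_fun_algebra D" "a \<in> D" "b \<in> D"
    and pos: "\<And>f. f \<in> D \<Longrightarrow> 0 \<le> B f f"
  shows "B a a \<le> 2 * B (\<lambda>x. a x - b x) (\<lambda>x. a x - b x) + 2 * B b b"
proof -
  have "B (\<lambda>x. a x - b x) (\<lambda>x. a x - b x) = B a a - 2 * B a b + B b b"
    using bilinear_expand[OF B D, of "-1"] by simp
  moreover have "0 \<le> B (\<lambda>x. a x + (-2) * b x) (\<lambda>x. a x + (-2) * b x)"
    using pos algebra_add[OF D(1,2) algebra_scale[OF D(1,3)]] by blast
  moreover have "B (\<lambda>x. a x + (-2) * b x) (\<lambda>x. a x + (-2) * b x) = B a a - 4 * B a b + 4 * B b b"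
    using bilinear_expand[OF B D, of "-2"] by simp
  ultimately show ?thesis by linarith
qed

lemma lagrangian_bilinear:
  "lagrangian D L \<Longrightarrow> h \<in> D \<Longrightarrow> symmetric_bilinear_on D (\<lambda>f g. L f g h)"
  unfolding lagrangian_def symmetric_bilinear_on_def by blast

lemma lagrangian_positive:
  "lagrangian D L \<Longrightarrow> f \<in> D \<Longrightarrow> positive_functional D (L f f)"
  unfolding lagrangian_def by blast

lemma lagrangian_in_dual: "lagrangian D L \<Longrightarrow> f \<in> D \<Longrightarrow> g \<in> D \<Longrightarrow> in_dual D (L f g)"
  unfolding lagrangian_def by blast

lemma lagrangian_T1_closed: "lagrangian D L \<Longrightarrow> \<forall>f\<in>D. T1 f \<in> D"
  unfolding lagrangian_def by blast

text \<open>On the diagonal the polarised energy form is the energy: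
  E_L(g,g) = (E_L(2g) - E_L(0))/4 = E_L(g) = ||L_g||/2.\<close>

lemma energy_form_diag:
  assumes D: "bounded_fun_algebra D" and L: "lagrangian D L" and g: "g \<in> D"
  shows "energy_form D L g g = dual_norm D (L g g) / 2"
proof -
  have B: "symmetric_bilinear_on D (\<lambda>f g. L f g h)" if "h \<in> D" for h
    using lagrangian_bilinear[OF L that] .
  have double: "L (\<lambda>x. g x + g x) (\<lambda>x. g x + g x) h = 4 * L g g h" if "h \<in> D" for h
    using bilinear_expand[OF B[OF that] D g g, of 1] by simp
  have zero: "L (\<lambda>x. g x - g x) (\<lambda>x. g x - g x) h = 0 * L g g h" if "h \<in> D" for h
    using bilinear_expand[OF B[OF that] D g g, of "-1"] by simp
  have dual: "in_dual D (L k k)" if "k \<in> D" for k using lagrangian_in_dual[OF L that that] .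
  have "dual_norm D (L (\<lambda>x. g x + g x) (\<lambda>x. g x + g x)) = 4 * dual_norm D (L g g)"
    using dual_norm_scale[OF dual[OF g] dual[OF algebra_add[OF D g g]] D _ double] by simp
  moreover have "dual_norm D (L (\<lambda>x. g x - g x) (\<lambda>x. g x - g x)) = 0 * dual_norm D (L g g)"
    using dual_norm_scale[OF dual[OF g] dual[OF algebra_diff[OF D g g]] D _ zero] by simp
  ultimately show ?thesis unfolding energy_form_def energy_def by simp
qed

definition uniformly_Cauchy_on_ball ::
  "('a \<Rightarrow> real) set \<Rightarrow> (('a \<Rightarrow> real) \<Rightarrow> ('a \<Rightarrow> real) \<Rightarrow> ('a \<Rightarrow> real) \<Rightarrow> real)
     \<Rightarrow> (nat \<Rightarrow> 'a \<Rightarrow> real) \<Rightarrow> bool" where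
  "uniformly_Cauchy_on_ball D L fs \<longleftrightarrow>
     (\<forall>e>0. \<exists>N. \<forall>n\<ge>N. \<forall>m\<ge>N. \<forall>h\<in>D. supnorm h \<le> 1 \<longrightarrow>
        \<bar>L (\<lambda>x. fs n x - fs m x) (\<lambda>x. fs n x - fs m x) h\<bar> < e)"

text \<open>Step (1a): an E_L-Cauchy sequence is uniformly Cauchy on the unit ball, since
  |L_f(h)| \<le> ||L_f|| = 2 E_L(f,f) for sup norm of h at most 1.\<close>

lemma energy_Cauchy_uniformly_Cauchy:
  assumes D: "bounded_fun_algebra D" and L: "lagrangian D L" and fs: "\<forall>n. fs n \<in> D"
    and Cauchy: "\<forall>\<epsilon>>0. \<exists>N. \<forall>n\<ge>N. \<forall>m\<ge>N.
       energy_form D L (\<lambda>x. fs n x - fs m x) (\<lambda>x. fs n x - fs m x) < \<epsilon>"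
  shows "uniformly_Cauchy_on_ball D L fs"
  unfolding uniformly_Cauchy_on_ball_def
proof (intro allI impI)
  fix e :: real assume "0 < e"
  then obtain N where N: "\<forall>n\<ge>N. \<forall>m\<ge>N.
      energy_form D L (\<lambda>x. fs n x - fs m x) (\<lambda>x. fs n x - fs m x) < e / 2"
  proof -
    have "0 < e / 2" using \<open>0 < e\<close> by simp
    then show ?thesis using Cauchy that by blast
  qed
  have "\<bar>L (\<lambda>x. fs n x - fs m x) (\<lambda>x. fs n x - fs m x) h\<bar> < e"
    if "n \<ge> N" "m \<ge> N" "h \<in> D" "supnorm h \<le> 1" for n m h
  proof -
    define d where "d = (\<lambda>x. fs n x - fs m x)"
    have d: "d \<in> D" unfolding d_def using algebra_diff[OF D] fs by blast
    have "\<bar>L d d h\<bar> \<le> dual_norm D (L d d)"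
      using dual_norm_upper[OF lagrangian_in_dual[OF L d d] D that(3,4)] .
    also have "\<dots> = 2 * energy_form D L d d" using energy_form_diag[OF D L d] by simp
    also have "\<dots> < e"
    proof -
      have "energy_form D L d d < e / 2" unfolding d_def using N that(1,2) by blast
      then show ?thesis by linarith
    qed
    finally show ?thesis unfolding d_def .
  qed
  then show "\<exists>N. \<forall>n\<ge>N. \<forall>m\<ge>N. \<forall>h\<in>D. supnorm h \<le> 1 \<longrightarrow>
      \<bar>L (\<lambda>x. fs n x - fs m x) (\<lambda>x. fs n x - fs m x) h\<bar> < e" by blast
qed

lemma closable_lagrangian_pointwise:
  assumes closable: "supnorm_closable_lagrangian D L" and fs: "\<forall>n. fs n \<in> D"
    and uniform: "uniformly_Cauchy_on_ball D L fs"
    and to_zero: "(\<lambda>n. supnorm (fs n)) \<longlonglongrightarrow> 0"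
    and h: "h \<in> D" "\<forall>x. 0 \<le> h x" "supnorm h \<le> 1"
  shows "(\<lambda>n. L (fs n) (fs n) h) \<longlonglongrightarrow> 0"
proof -
  have "supnorm_closable D (\<lambda>f g. L f g h)"
    using closable h unfolding supnorm_closable_lagrangian_def by blast
  moreover have "\<forall>\<epsilon>>0. \<exists>N. \<forall>n\<ge>N. \<forall>m\<ge>N. L (\<lambda>x. fs n x - fs m x) (\<lambda>x. fs n x - fs m x) h < \<epsilon>"
    using uniform h unfolding uniformly_Cauchy_on_ball_def by (meson abs_less_iff)
  ultimately show ?thesis using fs to_zero unfolding supnorm_closable_def by blast
qed

lemma lagrangian_uniform_bound:
  assumes D: "bounded_fun_algebra D" and L: "lagrangian D L" and fs: "\<forall>n. fs n \<in> D"
    and N: "\<forall>n\<ge>N. \<forall>m\<ge>N. \<forall>h\<in>D. supnorm h \<le> 1 \<longrightarrow>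
           \<bar>L (\<lambda>x. fs n x - fs m x) (\<lambda>x. fs n x - fs m x) h\<bar> < e"
    and h: "h \<in> D" "\<forall>x. 0 \<le> h x" "supnorm h \<le> 1"
    and lim: "(\<lambda>m. L (fs m) (fs m) h) \<longlonglongrightarrow> 0"
    and "N \<le> n"
  shows "L (fs n) (fs n) h \<le> 2 * e"
proof (rule LIMSEQ_le_const)
  show "(\<lambda>m. 2 * e + 2 * L (fs m) (fs m) h) \<longlonglongrightarrow> 2 * e"
    using tendsto_add[OF tendsto_const tendsto_mult[OF tendsto_const lim]] by simp
  have pos: "0 \<le> L f f h" if "f \<in> D" for f
    using lagrangian_positive[OF L that] h unfolding positive_functional_def by blast
  have "L (fs n) (fs n) h \<le> 2 * e + 2 * L (fs m) (fs m) h" if "N \<le> m" for m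
  proof -
    have "L (fs n) (fs n) h \<le>
        2 * L (\<lambda>x. fs n x - fs m x) (\<lambda>x. fs n x - fs m x) h + 2 * L (fs m) (fs m) h"
      using positive_bilinear_quadratic_bound[OF lagrangian_bilinear[OF L h(1)] D] fs pos by blast
    moreover have "\<bar>L (\<lambda>x. fs n x - fs m x) (\<lambda>x. fs n x - fs m x) h\<bar> < e"
      using N \<open>N \<le> n\<close> that h(1,3) by blast
    ultimately show ?thesis by linarith
  qed
  then show "\<exists>M. \<forall>m\<ge>M. L (fs n) (fs n) h \<le> 2 * e + 2 * L (fs m) (fs m) h" by blast
qed

lemma dual_norm_eventually_small:
  assumes D: "bounded_fun_algebra D" and L: "lagrangian D L"
    and closable: "supnorm_closable_lagrangian D L" and fs: "\<forall>n. fs n \<in> D"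
    and uniform: "uniformly_Cauchy_on_ball D L fs"
    and to_zero: "(\<lambda>n. supnorm (fs n)) \<longlonglongrightarrow> 0"
    and N: "\<forall>n\<ge>N. \<forall>m\<ge>N. \<forall>h\<in>D. supnorm h \<le> 1 \<longrightarrow>
           \<bar>L (\<lambda>x. fs n x - fs m x) (\<lambda>x. fs n x - fs m x) h\<bar> < e"
    and "N \<le> n"
  shows "dual_norm D (L (fs n) (fs n)) \<le> 2 * e"
proof -
  have fn: "fs n \<in> D" using fs by blast
  have "L (fs n) (fs n) h \<le> 2 * e" if "h \<in> D" "\<forall>x. 0 \<le> h x" "supnorm h \<le> 1" for h
  proof -
    have lim: "(\<lambda>m. L (fs m) (fs m) h) \<longlonglongrightarrow> 0"
      using closable_lagrangian_pointwise[OF closable fs uniform to_zero that] .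
    show ?thesis
      by (rule lagrangian_uniform_bound[OF D L fs N]) (use that lim \<open>N \<le> n\<close> in auto)
  qed
  then show ?thesis
    using dual_norm_positive_le[OF D lagrangian_T1_closed[OF L]
        lagrangian_in_dual[OF L fn fn] lagrangian_positive[OF L fn]] by blast
qed

theorem propositionP:
  fixes D :: "('a \<Rightarrow> real) set"
    and L :: "('a \<Rightarrow> real) \<Rightarrow> ('a \<Rightarrow> real) \<Rightarrow> ('a \<Rightarrow> real) \<Rightarrow> real"
  assumes "bounded_fun_algebra D"
    and "stone_property D"
    and "lagrangian D L"
    and "supnorm_closable_lagrangian D L"
  shows "supnorm_closable D (energy_form D L)"
  unfolding supnorm_closable_def
proof (intro allI impI)
  note D = assms(1) and L = assms(3)
  fix fs :: "nat \<Rightarrow> 'a \<Rightarrow> real"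
  assume fs: "\<forall>n. fs n \<in> D"
    and Cauchy: "\<forall>\<epsilon>>0. \<exists>N. \<forall>n\<ge>N. \<forall>m\<ge>N.
       energy_form D L (\<lambda>x. fs n x - fs m x) (\<lambda>x. fs n x - fs m x) < \<epsilon>"
    and to_zero: "(\<lambda>n. supnorm (fs n)) \<longlonglongrightarrow> 0"
  have uniform: "uniformly_Cauchy_on_ball D L fs"
    using energy_Cauchy_uniformly_Cauchy[OF D L fs Cauchy] .
  show "(\<lambda>n. energy_form D L (fs n) (fs n)) \<longlonglongrightarrow> 0"
  proof (rule LIMSEQ_I)
    fix r :: real assume "0 < r"
    then obtain N where N: "\<forall>n\<ge>N. \<forall>m\<ge>N. \<forall>h\<in>D. supnorm h \<le> 1 \<longrightarrow>
        \<bar>L (\<lambda>x. fs n x - fs m x) (\<lambda>x. fs n x - fs m x) h\<bar> < r / 4"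
      using uniform unfolding uniformly_Cauchy_on_ball_def by (meson zero_less_divide_iff zero_less_numeral)
    have "norm (energy_form D L (fs n) (fs n) - 0) < r" if "N \<le> n" for n
    proof -
      have fn: "fs n \<in> D" using fs by blast
      have "dual_norm D (L (fs n) (fs n)) \<le> 2 * (r / 4)"
        using dual_norm_eventually_small[OF D L assms(4) fs uniform to_zero N that] .
      moreover have "0 \<le> dual_norm D (L (fs n) (fs n))"
        using dual_norm_nonneg[OF lagrangian_in_dual[OF L fn fn] D] .
      ultimately show ?thesis using energy_form_diag[OF D L fn] \<open>0 < r\<close> by simp
    qed
    then show "\<exists>N. \<forall>n\<ge>N. norm (energy_form D L (fs n) (fs n) - 0) < r" by blast
  qed
qed

end
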